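(* For every integer $m \geq 1$, let $\mathrm{Cay}(\sigma_m)$ and $\mathrm{Cay}(\tau_m)$ be the Cayley graphs (defined in the context) of the Boolean functions $\sigma_m, \tau_m : \mathbb{Z}_2^{2m} \to \mathbb{Z}_2$. Then $\mathrm{Cay}(\sigma_m)$ and $\mathrm{Cay}(\tau_m)$ are isomorphic (as simple graphs) if and only if $m \in \{1,2,3\}$.
   Context: Identify $\mathbb{Z}_2^{2m}$ with the integers $0,\dots,4^m-1$ via binary representation, so each $i \in \mathbb{Z}_2^{2m}$ has a base-4 representation with $m$ digits (each base-4 digit being a consecutive pair of bits). Define $\sigma_m(i)=1$ if and only if the number of base-4 digits of $i$ equal to $1$ is odd, and $\sigma_m(i)=0$ otherwise. Define $\tau_m(i)=1$ if and only if the number of base-4 digits of $i$ equal to $1$ or $2$ is nonzero and the number of base-4 digits of $i$ equal to $1$ is even, and $\tau_m(i)=0$ otherwise. For $f:\mathbb{Z}_2^{2m}\to\mathbb{Z}_2$ with $f(0)=0$, the Cayley graph $\mathrm{Cay}(f)$ is the simple undirected graph with vertex set $\mathbb{Z}_2^{2m}$ in which distinct $i,j$ are adjacent if and only if $f(i+j)=1$ (addition in $\mathbb{Z}_2^{2m}$). *)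

theory Defs
  imports Main
begin

text \<open>Z_2^{2m} identified with {0..<4^m}; addition is bitwise xor. Z_2 is bool.\<close>

definition vertices :: "nat \<Rightarrow> nat set" where
  "vertices m = {0..<4 ^ m}"

definition digit4 :: "nat \<Rightarrow> nat \<Rightarrow> nat" where
  "digit4 i k = (i div 4 ^ k) mod 4"

definition count_digits :: "nat \<Rightarrow> nat set \<Rightarrow> nat \<Rightarrow> nat" where
  "count_digits m D i = card {k. k < m \<and> digit4 i k \<in> D}"

definition sigma :: "nat \<Rightarrow> nat \<Rightarrow> bool" where
  "sigma m i = odd (count_digits m {1} i)"

definition tau :: "nat \<Rightarrow> nat \<Rightarrow> bool" where
  "tau m i = (count_digits m {1, 2} i \<noteq> 0 \<and> even (count_digits m {1} i))"

definition cay_adj :: "(nat \<Rightarrow> bool) \<Rightarrow> nat \<Rightarrow> nat \<Rightarrow> bool" where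
  "cay_adj f i j = (i \<noteq> j \<and> f (Bit_Operations.xor i j))"

definition graph_iso :: "nat set \<Rightarrow> (nat \<Rightarrow> nat \<Rightarrow> bool) \<Rightarrow> nat set \<Rightarrow> (nat \<Rightarrow> nat \<Rightarrow> bool) \<Rightarrow> bool" where
  "graph_iso V E W F = (\<exists>h. bij_betw h V W \<and> (\<forall>i\<in>V. \<forall>j\<in>V. E i j \<longleftrightarrow> F (h i) (h j)))"

end

theory Submission
  imports Defs
begin

text \<open>
  \<open>\<sigma>\<^sub>m\<close> is a quadratic Boolean function: all its third derivatives vanish, since the
  indicator of the digit 1 is quadratic on \<open>\<int>\<^sub>2\<^sup>2\<close> and \<open>\<sigma>\<^sub>m\<close> is the sum of these indicators
  over the digits. Hence in \<open>Cay(\<sigma>\<^sub>m)\<close> any three vertices \<open>u, v, w\<close> admit a vertex \<open>t\<close>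
  (namely \<open>u + v + w\<close>) whose neighbourhood is the symmetric difference of the neighbourhoods
  of \<open>u\<close>, \<open>v\<close> and \<open>w\<close>, complemented according to the adjacencies among \<open>u, v, w\<close>; this
  property is invariant under graph isomorphism. For \<open>m \<ge> 4\<close> it fails in \<open>Cay(\<tau>\<^sub>m)\<close>
  for \<open>u, v, w = 0, 1, 4\<close>: such a \<open>t\<close> would be adjacent to all of \<open>0, 7, 21, 70, 83\<close>, but
  these vertices have no common neighbour. This is a finite check, since the digits of \<open>t\<close>
  beyond the fourth enter only through how many of them lie in \<open>{1, 2}\<close> and in \<open>{1}\<close>.
  For \<open>m \<le> 3\<close> explicit isomorphisms are verified by computation.
\<close>

lemma xor_less_four_power:
  fixes x y :: nat
  assumes "x < 4 ^ m" and "y < 4 ^ m"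
  shows "xor x y < 4 ^ m"
proof -
  have "take_bit (2 * m) x = x" and "take_bit (2 * m) y = y"
    using assms by (simp_all add: take_bit_nat_eq_self_iff power_mult)
  then have "take_bit (2 * m) (xor x y) = xor x y"
    by simp
  then show ?thesis
    by (metis take_bit_nat_less_exp power_mult numeral_Bit0_eq_double mult_2 power2_eq_square)
qed

lemma digit4_eq_take_bit_drop_bit: "digit4 x k = take_bit 2 (drop_bit (2 * k) x)"
  by (simp add: digit4_def take_bit_eq_mod drop_bit_eq_div power_mult)

lemma digit4_xor: "digit4 (xor x y) k = xor (digit4 x k) (digit4 y k)"
  by (simp add: digit4_eq_take_bit_drop_bit)

lemma digit4_less: "digit4 x k < 4"
  by (simp add: digit4_def)

lemma less_four_cases: "(d::nat) < 4 \<Longrightarrow> d = 0 \<or> d = 1 \<or> d = 2 \<or> d = 3"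
  by auto

lemma count_digits_0 [simp]: "count_digits 0 D x = 0"
  by (simp add: count_digits_def)

lemma count_digits_Suc:
  "count_digits (Suc m) D x = count_digits m D x + of_bool (digit4 x m \<in> D)"
proof -
  have "{k. k < Suc m \<and> digit4 x k \<in> D}
      = {k. k < m \<and> digit4 x k \<in> D} \<union> (if digit4 x m \<in> D then {m} else {})"
    by (auto simp: less_Suc_eq)
  then show ?thesis
    unfolding count_digits_def by auto
qed

lemma count_digits_numeral:
  "count_digits (numeral k) D x
    = count_digits (pred_numeral k) D x + of_bool (digit4 x (pred_numeral k) \<in> D)"
  by (simp only: numeral_eq_Suc count_digits_Suc)

lemma cay_adj_eq: "\<not> f 0 \<Longrightarrow> cay_adj f i j = f (xor i j)"
  by (auto simp: cay_adj_def)

text \<open>The defining identity says that every third derivative \<open>D\<^sub>a D\<^sub>b D\<^sub>c f\<close> vanishes at \<open>0\<close>,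
  i.e.\ \<open>f\<close> has algebraic degree at most 2.\<close>

definition is_quadratic :: "(nat \<Rightarrow> bool) \<Rightarrow> bool" where
  "is_quadratic f \<longleftrightarrow> (\<forall>a b c. f (xor (xor a b) c)
     = (f (xor a b) \<noteq> (f (xor a c) \<noteq> (f (xor b c) \<noteq> (f a \<noteq> (f b \<noteq> f c))))))"

lemma is_quadraticD:
  "is_quadratic f \<Longrightarrow> f (xor (xor a b) c)
     = (f (xor a b) \<noteq> (f (xor a c) \<noteq> (f (xor b c) \<noteq> (f a \<noteq> (f b \<noteq> f c)))))"
  by (simp add: is_quadratic_def)

lemma is_quadratic_zero: "is_quadratic f \<Longrightarrow> \<not> f 0"
  using is_quadraticD[of f 0 0 0] by simp

lemma is_quadratic_xor:
  assumes "is_quadratic f" and "is_quadratic g"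
  shows "is_quadratic (\<lambda>x. f x \<noteq> g x)"
  unfolding is_quadratic_def
  apply (intro allI)
  subgoal for a b c
    using is_quadraticD[OF assms(1), of a b c] is_quadraticD[OF assms(2), of a b c] by argo
  done

definition triple_closed :: "nat set \<Rightarrow> (nat \<Rightarrow> nat \<Rightarrow> bool) \<Rightarrow> bool" where
  "triple_closed V E \<longleftrightarrow> (\<forall>u\<in>V. \<forall>v\<in>V. \<forall>w\<in>V. \<exists>t\<in>V. \<forall>z\<in>V.
      E t z = (E u z \<noteq> (E v z \<noteq> (E w z \<noteq> (E u v \<noteq> (E u w \<noteq> E v w))))))"

lemma triple_closed_graph_iso:
  assumes "graph_iso V E W F" and "triple_closed V E"
  shows "triple_closed W F"
proof -
  obtain h where bij: "bij_betw h V W"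
    and adj: "\<And>i j. i \<in> V \<Longrightarrow> j \<in> V \<Longrightarrow> F (h i) (h j) = E i j"
    using assms(1) unfolding graph_iso_def by metis
  have "W = h ` V"
    using bij by (simp add: bij_betw_def)
  then show ?thesis
    using assms(2) adj unfolding triple_closed_def by simp
qed

lemma triple_closed_cay_adj:
  assumes f: "is_quadratic f" and V: "\<And>x y. x \<in> V \<Longrightarrow> y \<in> V \<Longrightarrow> xor x y \<in> V"
  shows "triple_closed V (cay_adj f)"
  unfolding triple_closed_def cay_adj_eq[of f, OF is_quadratic_zero[OF f]]
proof (intro ballI bexI)
  fix u v w z :: nat
  have xor_eqs: "xor (xor u v) (xor w z) = xor (xor (xor u v) w) z"
    "xor (xor u z) (xor v z) = xor u v" "xor (xor u z) (xor w z) = xor u w"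
    "xor (xor v z) (xor w z) = xor v w"
    by (simp_all add: xor.assoc xor.commute xor.left_commute)
  show "f (xor (xor (xor u v) w) z)
      = (f (xor u z) \<noteq> (f (xor v z) \<noteq> (f (xor w z) \<noteq> (f (xor u v) \<noteq> (f (xor u w) \<noteq> f (xor v w))))))"
    using is_quadraticD[OF f, of "xor u z" "xor v z" "xor w z"] unfolding xor_eqs by argo
next
  fix u v w assume "u \<in> V" "v \<in> V" "w \<in> V"
  then show "xor (xor u v) w \<in> V"
    using V by blast
qed

lemma sigma_Suc: "sigma (Suc m) = (\<lambda>x. sigma m x \<noteq> (digit4 x m = 1))"
  by (simp add: fun_eq_iff sigma_def count_digits_Suc)

lemma digit_is_one_quadratic: "is_quadratic (\<lambda>x. digit4 x k = 1)"
proof -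
  have digits: "(xor (xor a b) c = 1) = ((xor a b = 1) \<noteq> ((xor a c = 1) \<noteq> ((xor b c = 1)
           \<noteq> ((a = 1) \<noteq> ((b = 1) \<noteq> (c = 1))))))" if "a < 4" "b < 4" "c < 4" for a b c :: nat
    using that apply -
    apply (drule less_four_cases)+
    apply (elim disjE)
    by simp_all
  then show ?thesis
    unfolding is_quadratic_def digit4_xor by (intro allI digits digit4_less)
qed

lemma sigma_quadratic: "is_quadratic (sigma m)"
proof (induction m)
  case 0
  then show ?case
    by (simp add: is_quadratic_def sigma_def)
next
  case (Suc m)
  then show ?case
    unfolding sigma_Suc by (rule is_quadratic_xor[OF _ digit_is_one_quadratic])
qed

lemma digit4_eq_0_if_less_four_power:
  assumes "z < 4 ^ n" and "n \<le> k"
  shows "digit4 z k = 0"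
proof -
  have "z < 4 ^ k"
    using assms order_less_le_trans power_increasing by fastforce
  then show ?thesis
    by (simp add: digit4_def)
qed

lemma count_digits_xor_split:
  assumes "z < 4 ^ n" and "n \<le> m"
  shows "count_digits m D (xor x z)
    = count_digits n D (xor x z) + card {k. n \<le> k \<and> k < m \<and> digit4 x k \<in> D}"
proof -
  have split: "{k. k < m \<and> digit4 (xor x z) k \<in> D}
      = {k. k < n \<and> digit4 (xor x z) k \<in> D} \<union> {k. n \<le> k \<and> k < m \<and> digit4 x k \<in> D}"
    using assms by (auto simp: digit4_xor digit4_eq_0_if_less_four_power)
  have "finite {k. n \<le> k \<and> k < m \<and> digit4 x k \<in> D}"
    by (rule finite_subset[of _ "{..<m}"]) auto
  then show ?thesis
    unfolding count_digits_def split by (subst card_Un_disjoint) auto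
qed

lemma tau_eq_if_less_four_power:
  assumes "y < 4 ^ n" and "n \<le> m"
  shows "tau m y = tau n y"
  using count_digits_xor_split[OF assms, of _ 0] unfolding tau_def by (simp add: digit4_def)

lemma count_digits_eq_sum: "count_digits n D y = (\<Sum>k<n. of_bool (digit4 y k \<in> D))"
proof -
  have "{..<n} \<inter> {k. digit4 y k \<in> D} = {k. k < n \<and> digit4 y k \<in> D}"
    by auto
  then show ?thesis
    by (simp add: count_digits_def)
qed

lemma sum_lessThan_four: "(\<Sum>k<4. f k) = f 0 + f 1 + f 2 + f (3::nat)"
  by (simp add: numeral_eq_Suc)

text \<open>Here \<open>d\<close> stands for the four lowest digits of a vertex \<open>t\<close>, and \<open>r12\<close> and \<open>r1\<close> for the
  numbers of higher digits of \<open>t\<close> in \<open>{1, 2}\<close> and in \<open>{1}\<close>.\<close>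

lemma no_common_neighbour_low_digits:
  fixes d :: "nat \<Rightarrow> nat" and r1 r12 :: nat
  assumes "\<forall>k<4. d k < 4" and "r1 \<le> r12"
  shows "\<exists>z\<in>{0, 7, 21, 70, 83}.
    \<not> ((\<Sum>k<4. of_bool (xor (d k) (digit4 z k) \<in> {1, 2})) + r12 \<noteq> 0
        \<and> even ((\<Sum>k<4. of_bool (xor (d k) (digit4 z k) \<in> {1})) + r1))"
proof -
  obtain a b :: nat where ab: "(a, b) \<in> {(0, 0), (1, 0), (1, 1)}"
    and shift: "\<And>c12 c1. (c12 + r12 \<noteq> 0 \<and> even (c1 + r1)) = (c12 + a \<noteq> 0 \<and> even (c1 + b))"
  proof
    show "(min r12 1, r1 mod 2) \<in> {(0, 0), (1, 0), (1, 1)}"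
      using assms(2) by auto
    show "(c12 + r12 \<noteq> 0 \<and> even (c1 + r1)) = (c12 + min r12 1 \<noteq> 0 \<and> even (c1 + r1 mod 2))"
      for c12 c1 :: nat
      using assms(2) by (cases "r12 = 0") (simp_all add: even_add)
  qed
  have "d 0 < 4" "d 1 < 4" "d 2 < 4" "d 3 < 4"
    using assms(1) by auto
  with ab show ?thesis
    unfolding shift sum_lessThan_four
    apply (simp add: digit4_def)
    apply (drule less_four_cases)+
    apply (elim disjE conjE)
    by simp_all
qed

lemma tau_no_common_neighbour:
  assumes "4 \<le> m"
  shows "\<exists>z\<in>{0, 7, 21, 70, 83}. \<not> tau m (xor t z)"
proof -
  define r12 where "r12 = card {k. 4 \<le> k \<and> k < m \<and> digit4 t k \<in> {1, 2}}"
  define r1 where "r1 = card {k. 4 \<le> k \<and> k < m \<and> digit4 t k \<in> {1}}"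
  have "r1 \<le> r12"
    unfolding r1_def r12_def by (rule card_mono) (auto intro: finite_subset[of _ "{..<m}"])
  then obtain z where z: "z \<in> {0, 7, 21, 70, 83}"
    and no_adj: "\<not> (count_digits 4 {1, 2} (xor t z) + r12 \<noteq> 0 \<and> even (count_digits 4 {1} (xor t z) + r1))"
    unfolding count_digits_eq_sum digit4_xor
    using no_common_neighbour_low_digits[of "digit4 t"] digit4_less by blast
  have "z < 4 ^ 4"
    using z by auto
  have "tau m (xor t z)
      = (count_digits 4 {1, 2} (xor t z) + r12 \<noteq> 0 \<and> even (count_digits 4 {1} (xor t z) + r1))"
    unfolding tau_def r12_def r1_def count_digits_xor_split[OF \<open>z < 4 ^ 4\<close> assms] ..
  then show ?thesis
    using z no_adj by blast
qed

lemma tau_zero: "\<not> tau m 0"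
  by (simp add: tau_def count_digits_def digit4_def)

lemma tau_triple_sum_at_witnesses:
  assumes "4 \<le> m" and "z \<in> {0, 7, 21, 70, 83}"
  shows "tau m z \<noteq> (tau m (xor 1 z) \<noteq> (tau m (xor 4 z) \<noteq> (tau m 1 \<noteq> (tau m 4 \<noteq> tau m 5))))"
proof -
  have "y < 4 ^ 4 \<Longrightarrow> tau m y = tau 4 y" for y
    using tau_eq_if_less_four_power assms(1) by blast
  moreover have "z < 4 ^ 4" "xor 1 z < 4 ^ 4" "xor 4 z < 4 ^ 4"
    using assms(2) by auto
  ultimately show ?thesis
    using assms(2)
    by (elim insertE emptyE) (simp_all add: tau_def count_digits_eq_sum sum_lessThan_four digit4_def)
qed

lemma tau_not_triple_closed:
  assumes "4 \<le> m"
  shows "\<not> triple_closed (vertices m) (cay_adj (tau m))"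
proof
  assume closed: "triple_closed (vertices m) (cay_adj (tau m))"
  have "(4::nat) ^ 4 \<le> 4 ^ m"
    using assms by (rule power_increasing) simp
  then have small: "y \<in> vertices m" if "y < 4 ^ 4" for y
    using that by (simp add: vertices_def)
  have "0 \<in> vertices m" "1 \<in> vertices m" "4 \<in> vertices m"
    using small by simp_all
  then have "\<exists>t\<in>vertices m. \<forall>z\<in>vertices m. tau m (xor t z)
      = (tau m (xor 0 z) \<noteq> (tau m (xor 1 z) \<noteq> (tau m (xor 4 z)
          \<noteq> (tau m (xor 0 1) \<noteq> (tau m (xor 0 4) \<noteq> tau m (xor 1 4))))))"
    by (rule closed[unfolded triple_closed_def cay_adj_eq[of "tau m", OF tau_zero], rule_format])
  then obtain t where t: "\<forall>z\<in>vertices m. tau m (xor t z)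
      = (tau m (xor 0 z) \<noteq> (tau m (xor 1 z) \<noteq> (tau m (xor 4 z)
          \<noteq> (tau m (xor 0 1) \<noteq> (tau m (xor 0 4) \<noteq> tau m (xor 1 4))))))" ..
  have "tau m (xor t z)" if "z \<in> {0, 7, 21, 70, 83}" for z
  proof -
    have "z \<in> vertices m"
      using that small by auto
    moreover have "xor 1 4 = (5::nat)"
      by simp
    ultimately show ?thesis
      using t tau_triple_sum_at_witnesses[OF assms that] by simp
  qed
  then show False
    using tau_no_common_neighbour[OF assms, of t] by blast
qed

lemma all_less_four_power_Suc:
  "(\<forall>i::nat<4 ^ Suc n. P i) \<longleftrightarrow> (\<forall>a<4. \<forall>i<4 ^ n. P (a + 4 * i))"
proof
  assume "\<forall>i<4 ^ Suc n. P i"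
  then show "\<forall>a<4. \<forall>i<4 ^ n. P (a + 4 * i)"
    by auto
next
  assume digits: "\<forall>a<4. \<forall>i<4 ^ n. P (a + 4 * i)"
  show "\<forall>i<4 ^ Suc n. P i"
  proof (intro allI impI)
    fix i :: nat
    assume "i < 4 ^ Suc n"
    then have "P (i mod 4 + 4 * (i div 4))"
      by (intro digits[rule_format]) (simp_all add: div_less_iff_less_mult)
    then show "P i"
      by (simp only: mod_mult_div_eq)
  qed
qed

lemma all_less_four_power_numeral:
  "(\<forall>i::nat<4 ^ numeral k. P i) \<longleftrightarrow> (\<forall>a<4. \<forall>i<4 ^ pred_numeral k. P (a + 4 * i))"
  by (simp only: numeral_eq_Suc[of k] all_less_four_power_Suc)

lemma graph_iso_cay_adj_of_list:
  fixes H :: "nat list"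
  assumes "\<forall>i<n. \<forall>j<n. f (xor i j) = g (xor (H ! i) (H ! j))"
    and "distinct H" and "length H = n" and "\<forall>x\<in>set H. x < n"
  shows "graph_iso {0..<n} (cay_adj f) {0..<n} (cay_adj g)"
  unfolding graph_iso_def
proof (intro exI conjI ballI)
  have "card (set H) = card {0..<n}"
    using distinct_card[OF assms(2)] assms(3) by simp
  moreover have "set H \<subseteq> {0..<n}"
    using assms(4) by auto
  ultimately have "set H = {0..<n}"
    by (simp add: card_subset_eq)
  then show "bij_betw ((!) H) {0..<n} {0..<n}"
    using bij_betw_nth[OF assms(2)] assms(3) by (simp add: atLeast0LessThan)
next
  fix i j assume "i \<in> {0..<n}" "j \<in> {0..<n}"
  then show "cay_adj f i j = cay_adj g (H ! i) (H ! j)"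
    using assms(1-3) by (simp add: cay_adj_def nth_eq_iff_index_eq)
qed

lemma graph_iso_sigma_tau_1:
  "graph_iso (vertices 1) (cay_adj (sigma 1)) (vertices 1) (cay_adj (tau 1))"
proof -
  define H :: "nat list" where "H = [0, 2, 1, 3]"
  have "\<forall>i<4 ^ 1. \<forall>j<4 ^ 1. sigma 1 (xor i j) = tau 1 (xor (H ! i) (H ! j))"
    apply (simp only: all_less_four_power_numeral pred_numeral_simps BitM.simps numeral_One
        power_one_right)
    apply (intro allI impI)
    apply (drule less_four_cases)+
    apply (elim disjE)
    by (simp_all add: H_def sigma_def tau_def count_digits_numeral count_digits_Suc digit4_def)
  moreover have "distinct H" "length H = 4 ^ 1" "\<forall>x\<in>set H. x < 4 ^ 1"
    by (simp_all add: H_def)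
  ultimately show ?thesis
    unfolding vertices_def by (intro graph_iso_cay_adj_of_list)
qed

lemma graph_iso_sigma_tau_2:
  "graph_iso (vertices 2) (cay_adj (sigma 2)) (vertices 2) (cay_adj (tau 2))"
proof -
  define H :: "nat list" where "H = [0, 2, 1, 3, 11, 9, 10, 8, 7, 5, 6, 4, 12, 14, 13, 15]"
  have "\<forall>i<4 ^ 2. \<forall>j<4 ^ 2. sigma 2 (xor i j) = tau 2 (xor (H ! i) (H ! j))"
    apply (simp only: all_less_four_power_numeral pred_numeral_simps BitM.simps numeral_One
        power_one_right)
    apply (intro allI impI)
    apply (drule less_four_cases)+
    apply (elim disjE)
    by (simp_all add: H_def sigma_def tau_def count_digits_numeral count_digits_Suc digit4_def)
  moreover have "distinct H" "length H = 4 ^ 2" "\<forall>x\<in>set H. x < 4 ^ 2"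
    by (simp_all add: H_def)
  ultimately show ?thesis
    unfolding vertices_def by (intro graph_iso_cay_adj_of_list)
qed

lemma graph_iso_sigma_tau_3:
  "graph_iso (vertices 3) (cay_adj (sigma 3)) (vertices 3) (cay_adj (tau 3))"
proof -
  define H :: "nat list" where "H = [0, 2, 1, 3, 11, 57, 58, 8, 7, 53, 54, 4, 12, 14, 13, 15,
    47, 33, 34, 44, 39, 25, 26, 36, 43, 21, 22, 40, 35, 45, 46, 32,
    31, 17, 18, 28, 23, 41, 42, 20, 27, 37, 38, 24, 19, 29, 30, 16,
    48, 50, 49, 51, 59, 9, 10, 56, 55, 5, 6, 52, 60, 62, 61, 63]"
  have "\<forall>i<4 ^ 3. \<forall>j<4 ^ 3. sigma 3 (xor i j) = tau 3 (xor (H ! i) (H ! j))"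
    apply (simp only: all_less_four_power_numeral pred_numeral_simps BitM.simps numeral_One
        power_one_right)
    apply (intro allI impI)
    apply (drule less_four_cases)+
    apply (elim disjE)
    by (simp_all add: H_def sigma_def tau_def count_digits_numeral count_digits_Suc digit4_def)
  moreover have "distinct H" "length H = 4 ^ 3" "\<forall>x\<in>set H. x < 4 ^ 3"
    by (simp_all add: H_def)
  ultimately show ?thesis
    unfolding vertices_def by (intro graph_iso_cay_adj_of_list)
qed

theorem theorem1:
  fixes m :: nat
  assumes "m \<ge> 1"
  shows "graph_iso (vertices m) (cay_adj (sigma m)) (vertices m) (cay_adj (tau m))
         \<longleftrightarrow> m \<in> {1, 2, 3}"
proof
  assume iso: "graph_iso (vertices m) (cay_adj (sigma m)) (vertices m) (cay_adj (tau m))"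
  have "triple_closed (vertices m) (cay_adj (sigma m))"
    by (rule triple_closed_cay_adj[OF sigma_quadratic]) (simp add: vertices_def xor_less_four_power)
  then have "triple_closed (vertices m) (cay_adj (tau m))"
    by (rule triple_closed_graph_iso[OF iso])
  then have "\<not> 4 \<le> m"
    using tau_not_triple_closed by blast
  with assms show "m \<in> {1, 2, 3}"
    by auto
next
  assume "m \<in> {1, 2, 3}"
  then show "graph_iso (vertices m) (cay_adj (sigma m)) (vertices m) (cay_adj (tau m))"
    using graph_iso_sigma_tau_1 graph_iso_sigma_tau_2 graph_iso_sigma_tau_3 by auto
qed

end
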